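(* Let $g$ be a Riemannian metric on an open set of $\mathbb R^n$, $n\ge3$, with $g_{jk}\in C^r_*$, $r>1$, and $|g|=\det(g_{jk})=1$. Then the principal symbol $\sigma(W_{abcd})$ of the linearization at $g$ of the Weyl tensor satisfies, for every symmetric matrix $h$ and covector $\xi$, $$\xi^a\xi^d\sigma(W_{abcd})h=\frac{n-3}{2(n-2)}\Big[|\xi|^4h_{bc}-|\xi|^2\big(\xi_b\sigma(-i\Gamma_c)h+\xi_c\sigma(-i\Gamma_b)h\big)+\frac{n-2}{n-1}\xi_b\xi_c\xi_l\sigma(-i\Gamma^l)h+\frac1{n-1}|\xi|^2\big(\xi_l\sigma(-i\Gamma^l)h\big)g_{bc}\Big].$$
   Context: $C^r_*$ is the local Zygmund space. For a nonlinear differential operator $T=T(g)$ acting on metrics, $\sigma(T)$ denotes the principal symbol of its linearization at $g$, applied to a symmetric matrix $h$. Indices are raised and lowered and $|\xi|$ is computed with $g$. $\Gamma^k_{ab}=\frac12g^{kl}(\partial_ag_{bl}+\partial_bg_{al}-\partial_lg_{ab})$, $\Gamma^k=g^{ab}\Gamma^k_{ab}$, $\Gamma_k=g_{kl}\Gamma^l$. Curvature: $R_{abcd}=\langle(\nabla_a\nabla_b-\nabla_b\nabla_a)\partial_c,\partial_d\rangle$ (in coordinates, as distributions for low regularity), $R_{bc}=R_{abc}{}^a$, $R=g^{bc}R_{bc}$, $P_{ab}=\frac1{n-2}(R_{ab}-\frac{R}{2(n-1)}g_{ab})$, $W_{abcd}=R_{abcd}+P_{ac}g_{bd}-P_{b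c}g_{ad}+P_{bd}g_{ac}-P_{ad}g_{bc}$.
   Formalization: The identity is asserted only for symmetric matrices h whose trace with respect to g vanishes, that is, for variations tangent to the metrics with |g|=1, rather than for every symmetric matrix h. The statement above fails without it. *)

theory Defs
  imports "HOL-Analysis.Analysis"
begin

text \<open>
  Pointwise (jet) model of a metric on an open subset of R^n, indices ranging over
  a finite type 'n with CARD('n) = n.  At a point x we record the 2-jet of g:
    g  :: real^'n^'n        the values g_{ab}(x)   (g $ a $ b)
    G1 a b c                the first derivatives \<partial>_c g_{ab}(x)
    G2 a b c d              the second derivatives \<partial>_c \<partial>_d g_{ab}(x)
  The curvature tensors are the coordinate expressions in this 2-jet, exactly as in
  the paper's conventions.
\<close>

type_synonym 'n jet1 = "'n \<Rightarrow> 'n \<Rightarrow> 'n \<Rightarrow> real"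
type_synonym 'n jet2 = "'n \<Rightarrow> 'n \<Rightarrow> 'n \<Rightarrow> 'n \<Rightarrow> real"

definition ginv :: "real^'n^'n \<Rightarrow> 'n::finite \<Rightarrow> 'n \<Rightarrow> real" where
  "ginv g a b = matrix_inv g $ a $ b"

definition dginv :: "real^'n^'n \<Rightarrow> 'n jet1 \<Rightarrow> 'n::finite \<Rightarrow> 'n \<Rightarrow> 'n \<Rightarrow> real" where
  "dginv g G1 k l c = - (\<Sum>p\<in>UNIV. \<Sum>q\<in>UNIV. ginv g k p * G1 p q c * ginv g q l)"

definition Chr :: "real^'n^'n \<Rightarrow> 'n jet1 \<Rightarrow> 'n::finite \<Rightarrow> 'n \<Rightarrow> 'n \<Rightarrow> real" where
  "Chr g G1 k a b = (1/2) * (\<Sum>l\<in>UNIV. ginv g k l * (G1 b l a + G1 a l b - G1 a b l))"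

definition dChr :: "real^'n^'n \<Rightarrow> 'n jet1 \<Rightarrow> 'n jet2 \<Rightarrow> 'n::finite \<Rightarrow> 'n \<Rightarrow> 'n \<Rightarrow> 'n \<Rightarrow> real" where
  "dChr g G1 G2 k a b c = (1/2) * (\<Sum>l\<in>UNIV.
      dginv g G1 k l c * (G1 b l a + G1 a l b - G1 a b l)
    + ginv g k l * (G2 b l a c + G2 a l b c - G2 a b l c))"

definition Gam_up :: "real^'n^'n \<Rightarrow> 'n jet1 \<Rightarrow> 'n::finite \<Rightarrow> real" where
  "Gam_up g G1 k = (\<Sum>a\<in>UNIV. \<Sum>b\<in>UNIV. ginv g a b * Chr g G1 k a b)"

definition Gam_down :: "real^'n^'n \<Rightarrow> 'n jet1 \<Rightarrow> 'n::finite \<Rightarrow> real" where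
  "Gam_down g G1 k = (\<Sum>l\<in>UNIV. g $ k $ l * Gam_up g G1 l)"

text \<open>R_{abc}^d, with (\<nabla>_a\<nabla>_b - \<nabla>_b\<nabla>_a)\<partial>_c = R_{abc}^d \<partial>_d\<close>
definition Riem_up :: "real^'n^'n \<Rightarrow> 'n jet1 \<Rightarrow> 'n jet2 \<Rightarrow> 'n::finite \<Rightarrow> 'n \<Rightarrow> 'n \<Rightarrow> 'n \<Rightarrow> real" where
  "Riem_up g G1 G2 a b c d = dChr g G1 G2 d b c a - dChr g G1 G2 d a c b
     + (\<Sum>e\<in>UNIV. Chr g G1 e b c * Chr g G1 d a e - Chr g G1 e a c * Chr g G1 d b e)"

definition Riem :: "real^'n^'n \<Rightarrow> 'n jet1 \<Rightarrow> 'n jet2 \<Rightarrow> 'n::finite \<Rightarrow> 'n \<Rightarrow> 'n \<Rightarrow> 'n \<Rightarrow> real" where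
  "Riem g G1 G2 a b c d = (\<Sum>e\<in>UNIV. Riem_up g G1 G2 a b c e * g $ e $ d)"

definition Ric :: "real^'n^'n \<Rightarrow> 'n jet1 \<Rightarrow> 'n jet2 \<Rightarrow> 'n::finite \<Rightarrow> 'n \<Rightarrow> real" where
  "Ric g G1 G2 b c = (\<Sum>a\<in>UNIV. Riem_up g G1 G2 a b c a)"

definition Scal :: "real^'n^'n \<Rightarrow> 'n jet1 \<Rightarrow> 'n::finite jet2 \<Rightarrow> real" where
  "Scal g G1 G2 = (\<Sum>b\<in>UNIV. \<Sum>c\<in>UNIV. ginv g b c * Ric g G1 G2 b c)"

definition Schouten :: "real^'n^'n \<Rightarrow> 'n jet1 \<Rightarrow> 'n jet2 \<Rightarrow> 'n::finite \<Rightarrow> 'n \<Rightarrow> real" where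
  "Schouten g G1 G2 a b = (1 / (real CARD('n) - 2)) *
     (Ric g G1 G2 a b - Scal g G1 G2 / (2 * (real CARD('n) - 1)) * g $ a $ b)"

definition Weyl :: "real^'n^'n \<Rightarrow> 'n jet1 \<Rightarrow> 'n jet2 \<Rightarrow> 'n::finite \<Rightarrow> 'n \<Rightarrow> 'n \<Rightarrow> 'n \<Rightarrow> real" where
  "Weyl g G1 G2 a b c d = Riem g G1 G2 a b c d
     + Schouten g G1 G2 a c * g $ b $ d - Schouten g G1 G2 b c * g $ a $ d
     + Schouten g G1 G2 b d * g $ a $ c - Schouten g G1 G2 a d * g $ b $ c"

text \<open>
  For a second-order operator T(g), whose value
  at a point is a function of the 2-jet, the principal symbol of its linearization at g
  is  \<sigma>(T)h = \<Sum> (\<partial>T/\<partial>(\<partial>_c\<partial>_d g_{ab})) (i\<xi>_c)(i\<xi>_d) h_{ab},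
  i.e. the directional derivative of T in the second-jet slot in direction -\<xi>_c\<xi>_d h_{ab}.
  For a first-order operator T(g) (function of the 1-jet), \<sigma>(-iT)h =
  -i \<Sum> (\<partial>T/\<partial>(\<partial>_c g_{ab})) (i\<xi>_c) h_{ab}, the directional derivative of T in the
  first-jet slot in direction \<xi>_c h_{ab}.
\<close>
definition psym2 :: "(real^'n^'n \<Rightarrow> 'n jet1 \<Rightarrow> 'n jet2 \<Rightarrow> real)
    \<Rightarrow> real^'n^'n \<Rightarrow> 'n jet1 \<Rightarrow> 'n jet2 \<Rightarrow> real^'n \<Rightarrow> real^'n^'n \<Rightarrow> real" where
  "psym2 T g G1 G2 \<xi> h =
     deriv (\<lambda>t. T g G1 (\<lambda>a b c d. G2 a b c d + t * (- (\<xi> $ c * \<xi> $ d * h $ a $ b)))) 0"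

definition psym1_negi :: "(real^'n^'n \<Rightarrow> 'n jet1 \<Rightarrow> real)
    \<Rightarrow> real^'n^'n \<Rightarrow> 'n jet1 \<Rightarrow> real^'n \<Rightarrow> real^'n^'n \<Rightarrow> real" where
  "psym1_negi T g G1 \<xi> h =
     deriv (\<lambda>t. T g (\<lambda>a b c. G1 a b c + t * (\<xi> $ c * h $ a $ b))) 0"

definition raise :: "real^'n^'n \<Rightarrow> real^'n \<Rightarrow> 'n::finite \<Rightarrow> real" where
  "raise g \<xi> a = (\<Sum>b\<in>UNIV. ginv g a b * \<xi> $ b)"

definition gnorm2 :: "real^'n^'n \<Rightarrow> real^'n::finite \<Rightarrow> real" where
  "gnorm2 g \<xi> = (\<Sum>a\<in>UNIV. \<Sum>b\<in>UNIV. ginv g a b * \<xi> $ a * \<xi> $ b)"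

end

theory Submission
  imports Defs
begin

text \<open>
  A principal symbol only sees the highest jet, and the curvature tensors are affine in the
  second jet of the metric (the Christoffel symbols in the first). So \<open>\<sigma>(W)\<close> is the linear part
  of the Weyl tensor evaluated at the jet \<open>-\<xi>\<^sub>c\<xi>\<^sub>d h\<^sub>a\<^sub>b\<close>, and \<open>\<sigma>(-i\<Gamma>)\<close> the linear part
  of \<open>\<Gamma>\<close> at \<open>\<xi>\<^sub>c h\<^sub>a\<^sub>b\<close>. Explicitly
  \<open>\<sigma>(R\<^sub>a\<^sub>b\<^sub>c\<^sub>d) = -\<onehalf>(\<xi>\<^sub>a\<xi>\<^sub>c h\<^sub>b\<^sub>d - \<xi>\<^sub>a\<xi>\<^sub>d h\<^sub>b\<^sub>c - \<xi>\<^sub>b\<xi>\<^sub>c h\<^sub>a\<^sub>d + \<xi>\<^sub>b\<xi>\<^sub>d h\<^sub>a\<^sub>c)\<close>,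
  and, since the linearisation of \<open>|g| = 1\<close> makes \<open>h\<close> trace free, \<open>\<sigma>(-i\<Gamma>\<^sub>k) = \<xi>\<^sup>b h\<^sub>b\<^sub>k\<close>.
  Contracting \<open>\<sigma>(W) = \<sigma>(R) + \<sigma>(P) \<owedge> g\<close> twice with \<open>\<xi>\<^sup>\<sharp>\<close> leaves only \<open>|\<xi>|\<^sup>2\<close>, \<open>\<xi>\<^sup>l h\<^sub>l\<^sub>b\<close>
  and \<open>\<xi>\<^sup>b\<xi>\<^sup>l h\<^sub>l\<^sub>b\<close>, and the claim becomes an identity of rational functions of \<open>n\<close>.
\<close>

lemma matrix_inv_mult:
  assumes "invertible g"
  shows "matrix_inv g ** g = mat 1" and "g ** matrix_inv g = mat 1"
  using someI_ex[OF assms[unfolded invertible_def]] unfolding matrix_inv_def by auto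

lemma transpose_matrix_inv_symmetric:
  fixes g :: "'a::comm_semiring_1^'n::finite^'n"
  assumes "invertible g" and "transpose g = g"
  shows "transpose (matrix_inv g) = matrix_inv g"
proof -
  have left_inv: "transpose (matrix_inv g) ** g = mat 1"
    using arg_cong[OF matrix_inv_mult(2)[OF assms(1)], of transpose] assms(2)
    by (simp add: matrix_transpose_mul)
  have "transpose (matrix_inv g) = transpose (matrix_inv g) ** g ** matrix_inv g"
    by (simp add: matrix_inv_mult(2)[OF assms(1)] matrix_mul_assoc[symmetric])
  also have "\<dots> = matrix_inv g"
    by (simp add: left_inv)
  finally show ?thesis .
qed

lemma sum_ginv_mult:
  assumes "invertible g"
  shows "(\<Sum>e\<in>UNIV. ginv g a e * g $ e $ b) = (if a = b then 1 else 0)"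
  using arg_cong[OF matrix_inv_mult(1)[OF assms], of "\<lambda>M. M $ a $ b"]
  by (simp add: ginv_def matrix_matrix_mult_def mat_def)

lemma deriv_affine:
  assumes "\<And>t. f t = A + t * (B::real)"
  shows "deriv f 0 = B"
proof -
  have "f = (\<lambda>t. A + t * B)"
    using assms by auto
  moreover have "((\<lambda>t. A + t * B) has_real_derivative B) (at 0)"
    by (auto intro!: derivative_eq_intros)
  ultimately show ?thesis
    using DERIV_imp_deriv by auto
qed

definition dChr_lin :: "real^'n^'n \<Rightarrow> 'n jet2 \<Rightarrow> 'n::finite \<Rightarrow> 'n \<Rightarrow> 'n \<Rightarrow> 'n \<Rightarrow> real" where
  "dChr_lin g X k a b c = (1/2) * (\<Sum>l\<in>UNIV. ginv g k l * (X b l a c + X a l b c - X a b l c))"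

definition Riem_up_lin :: "real^'n^'n \<Rightarrow> 'n jet2 \<Rightarrow> 'n::finite \<Rightarrow> 'n \<Rightarrow> 'n \<Rightarrow> 'n \<Rightarrow> real" where
  "Riem_up_lin g X a b c d = dChr_lin g X d b c a - dChr_lin g X d a c b"

definition Riem_lin :: "real^'n^'n \<Rightarrow> 'n jet2 \<Rightarrow> 'n::finite \<Rightarrow> 'n \<Rightarrow> 'n \<Rightarrow> 'n \<Rightarrow> real" where
  "Riem_lin g X a b c d = (\<Sum>e\<in>UNIV. Riem_up_lin g X a b c e * g $ e $ d)"

definition Ric_lin :: "real^'n^'n \<Rightarrow> 'n jet2 \<Rightarrow> 'n::finite \<Rightarrow> 'n \<Rightarrow> real" where
  "Ric_lin g X b c = (\<Sum>a\<in>UNIV. Riem_up_lin g X a b c a)"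

definition Scal_lin :: "real^'n^'n \<Rightarrow> 'n::finite jet2 \<Rightarrow> real" where
  "Scal_lin g X = (\<Sum>b\<in>UNIV. \<Sum>c\<in>UNIV. ginv g b c * Ric_lin g X b c)"

definition Schouten_lin :: "real^'n^'n \<Rightarrow> 'n jet2 \<Rightarrow> 'n::finite \<Rightarrow> 'n \<Rightarrow> real" where
  "Schouten_lin g X a b = (1 / (real CARD('n) - 2)) *
     (Ric_lin g X a b - Scal_lin g X / (2 * (real CARD('n) - 1)) * g $ a $ b)"

definition Weyl_lin :: "real^'n^'n \<Rightarrow> 'n jet2 \<Rightarrow> 'n::finite \<Rightarrow> 'n \<Rightarrow> 'n \<Rightarrow> 'n \<Rightarrow> real" where
  "Weyl_lin g X a b c d = Riem_lin g X a b c d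
     + Schouten_lin g X a c * g $ b $ d - Schouten_lin g X b c * g $ a $ d
     + Schouten_lin g X b d * g $ a $ c - Schouten_lin g X a d * g $ b $ c"

definition Chr_lin :: "real^'n^'n \<Rightarrow> 'n jet1 \<Rightarrow> 'n::finite \<Rightarrow> 'n \<Rightarrow> 'n \<Rightarrow> real" where
  "Chr_lin g K k a b = (1/2) * (\<Sum>l\<in>UNIV. ginv g k l * (K b l a + K a l b - K a b l))"

definition Gam_up_lin :: "real^'n^'n \<Rightarrow> 'n jet1 \<Rightarrow> 'n::finite \<Rightarrow> real" where
  "Gam_up_lin g K k = (\<Sum>a\<in>UNIV. \<Sum>b\<in>UNIV. ginv g a b * Chr_lin g K k a b)"

lemma dChr_shift_jet2:
  "dChr g G1 (\<lambda>a b c d. G2 a b c d + t * X a b c d) k a b c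
     = dChr g G1 G2 k a b c + t * dChr_lin g X k a b c"
  unfolding dChr_def dChr_lin_def sum_distrib_left sum.distrib[symmetric]
  by (rule sum.cong) (auto simp: algebra_simps)

lemma Riem_up_shift_jet2:
  "Riem_up g G1 (\<lambda>a b c d. G2 a b c d + t * X a b c d) a b c d
     = Riem_up g G1 G2 a b c d + t * Riem_up_lin g X a b c d"
  unfolding Riem_up_def Riem_up_lin_def dChr_shift_jet2 by (simp add: algebra_simps)

lemma Riem_shift_jet2:
  "Riem g G1 (\<lambda>a b c d. G2 a b c d + t * X a b c d) a b c d
     = Riem g G1 G2 a b c d + t * Riem_lin g X a b c d"
  unfolding Riem_def Riem_lin_def Riem_up_shift_jet2
  by (simp add: algebra_simps sum.distrib sum_distrib_left)

lemma Ric_shift_jet2: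
  "Ric g G1 (\<lambda>a b c d. G2 a b c d + t * X a b c d) b c = Ric g G1 G2 b c + t * Ric_lin g X b c"
  unfolding Ric_def Ric_lin_def Riem_up_shift_jet2
  by (simp add: algebra_simps sum.distrib sum_distrib_left)

lemma Scal_shift_jet2:
  "Scal g G1 (\<lambda>a b c d. G2 a b c d + t * X a b c d) = Scal g G1 G2 + t * Scal_lin g X"
  unfolding Scal_def Scal_lin_def Ric_shift_jet2
  by (simp add: algebra_simps sum.distrib sum_distrib_left)

lemma Schouten_shift_jet2:
  "Schouten g G1 (\<lambda>a b c d. G2 a b c d + t * X a b c d) a b
     = Schouten g G1 G2 a b + t * Schouten_lin g X a b"
  unfolding Schouten_def Schouten_lin_def Ric_shift_jet2 Scal_shift_jet2
  by (simp add: algebra_simps add_divide_distrib diff_divide_distrib)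

lemma Weyl_shift_jet2:
  "Weyl g G1 (\<lambda>a b c d. G2 a b c d + t * X a b c d) a b c d
     = Weyl g G1 G2 a b c d + t * Weyl_lin g X a b c d"
  unfolding Weyl_def Weyl_lin_def Riem_shift_jet2 Schouten_shift_jet2
  by (simp add: algebra_simps)

lemma Chr_shift_jet1:
  "Chr g (\<lambda>a b c. G1 a b c + t * K a b c) k a b = Chr g G1 k a b + t * Chr_lin g K k a b"
  unfolding Chr_def Chr_lin_def sum_distrib_left sum.distrib[symmetric]
  by (rule sum.cong) (auto simp: algebra_simps)

lemma Gam_up_shift_jet1:
  "Gam_up g (\<lambda>a b c. G1 a b c + t * K a b c) k = Gam_up g G1 k + t * Gam_up_lin g K k"
  unfolding Gam_up_def Gam_up_lin_def Chr_shift_jet1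
  by (simp add: algebra_simps sum.distrib sum_distrib_left)

lemma Gam_down_shift_jet1:
  "Gam_down g (\<lambda>a b c. G1 a b c + t * K a b c) k
     = Gam_down g G1 k + t * (\<Sum>l\<in>UNIV. g $ k $ l * Gam_up_lin g K l)"
  unfolding Gam_down_def Gam_up_shift_jet1
  by (simp add: algebra_simps sum.distrib sum_distrib_left)

definition jet2_symbol :: "real^'n \<Rightarrow> real^'n^'n \<Rightarrow> 'n::finite jet2" where
  "jet2_symbol \<xi> h a b c d = - (\<xi> $ c * \<xi> $ d * h $ a $ b)"

definition jet1_symbol :: "real^'n \<Rightarrow> real^'n^'n \<Rightarrow> 'n::finite jet1" where
  "jet1_symbol \<xi> h a b c = \<xi> $ c * h $ a $ b"

lemma psym2_Weyl:
  "psym2 (\<lambda>g' G1' G2'. Weyl g' G1' G2' a b c d) g G1 G2 \<xi> h = Weyl_lin g (jet2_symbol \<xi> h) a b c d"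
  unfolding psym2_def jet2_symbol_def[symmetric] by (rule deriv_affine) (rule Weyl_shift_jet2)

lemma psym1_negi_Gam_up:
  "psym1_negi (\<lambda>g' G1'. Gam_up g' G1' k) g G1 \<xi> h = Gam_up_lin g (jet1_symbol \<xi> h) k"
  unfolding psym1_negi_def jet1_symbol_def[symmetric] by (rule deriv_affine) (rule Gam_up_shift_jet1)

lemma psym1_negi_Gam_down:
  "psym1_negi (\<lambda>g' G1'. Gam_down g' G1' k) g G1 \<xi> h
     = (\<Sum>l\<in>UNIV. g $ k $ l * Gam_up_lin g (jet1_symbol \<xi> h) l)"
  unfolding psym1_negi_def jet1_symbol_def[symmetric] by (rule deriv_affine) (rule Gam_down_shift_jet1)

definition raise_snd :: "real^'n^'n \<Rightarrow> real^'n^'n \<Rightarrow> 'n::finite \<Rightarrow> 'n \<Rightarrow> real" where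
  "raise_snd g h b k = (\<Sum>l\<in>UNIV. ginv g k l * h $ b $ l)"

definition contract :: "real^'n^'n \<Rightarrow> real^'n \<Rightarrow> real^'n^'n \<Rightarrow> 'n::finite \<Rightarrow> real" where
  "contract g \<xi> h b = (\<Sum>l\<in>UNIV. raise g \<xi> l * h $ l $ b)"

definition contract_twice :: "real^'n^'n \<Rightarrow> real^'n \<Rightarrow> real^'n^'n \<Rightarrow> real" where
  "contract_twice g \<xi> h = (\<Sum>b\<in>UNIV. raise g \<xi> b * contract g \<xi> h b)"

definition gtrace :: "real^'n^'n \<Rightarrow> real^'n::finite^'n \<Rightarrow> real" where
  "gtrace g h = (\<Sum>a\<in>UNIV. \<Sum>b\<in>UNIV. ginv g a b * h $ a $ b)"

lemmas sum_collect =
  sum_distrib_left sum_distrib_right sum.distrib[symmetric] sum_subtractf[symmetric] sum_negf[symmetric]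

lemma sum_swap_factor:
  fixes u :: "'i \<Rightarrow> 'a::semiring_0"
  shows "(\<Sum>l\<in>UNIV. \<Sum>b\<in>UNIV. u b * f b l) = (\<Sum>b\<in>UNIV. u b * (\<Sum>l\<in>UNIV. f b l))"
  unfolding sum_distrib_left by (rule sum.swap)

lemma dChr_lin_jet2_symbol:
  "dChr_lin g (jet2_symbol \<xi> h) k a b c
     = -(1/2) * \<xi> $ c * (\<xi> $ a * raise_snd g h b k + \<xi> $ b * raise_snd g h a k - raise g \<xi> k * h $ a $ b)"
  unfolding dChr_lin_def jet2_symbol_def raise_snd_def raise_def sum_collect
  by (rule sum.cong) (auto simp: algebra_simps)

lemma Riem_up_lin_jet2_symbol:
  "Riem_up_lin g (jet2_symbol \<xi> h) a b c d
     = -(1/2) * (\<xi> $ a * \<xi> $ c * raise_snd g h b d - \<xi> $ a * raise g \<xi> d * h $ b $ c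
                 - \<xi> $ b * \<xi> $ c * raise_snd g h a d + \<xi> $ b * raise g \<xi> d * h $ a $ c)"
  unfolding Riem_up_lin_def dChr_lin_jet2_symbol by (simp add: algebra_simps)

lemma contract_Kulkarni_Nomizu:
  fixes u w :: "'n::finite \<Rightarrow> real" and g :: "real^'n^'n" and R P :: "'n \<Rightarrow> 'n \<Rightarrow> real"
  assumes lower: "\<And>b. (\<Sum>d\<in>UNIV. u d * g $ b $ d) = w b" "\<And>b. (\<Sum>d\<in>UNIV. u d * g $ d $ b) = w b"
    and P_commute: "\<And>x y. P x y = P y x"
  shows "(\<Sum>a\<in>UNIV. \<Sum>d\<in>UNIV. u a * u d *
            (R a d + P a c * g $ b $ d - P b c * g $ a $ d + P b d * g $ a $ c - P a d * g $ b $ c))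
       = (\<Sum>a\<in>UNIV. \<Sum>d\<in>UNIV. u a * u d * R a d)
         + w b * (\<Sum>a\<in>UNIV. u a * P a c) + w c * (\<Sum>a\<in>UNIV. u a * P a b)
         - (\<Sum>a\<in>UNIV. u a * w a) * P b c - g $ b $ c * (\<Sum>a\<in>UNIV. u a * (\<Sum>d\<in>UNIV. u d * P d a))"
proof -
  have "(\<Sum>a\<in>UNIV. \<Sum>d\<in>UNIV. u a * u d *
            (R a d + P a c * g $ b $ d - P b c * g $ a $ d + P b d * g $ a $ c - P a d * g $ b $ c))
      = (\<Sum>a\<in>UNIV. \<Sum>d\<in>UNIV. u a * u d * R a d)
        + (\<Sum>a\<in>UNIV. u a * P a c * (\<Sum>d\<in>UNIV. u d * g $ b $ d))
        - (\<Sum>a\<in>UNIV. u a * P b c * (\<Sum>d\<in>UNIV. u d * g $ a $ d))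
        + (\<Sum>a\<in>UNIV. u a * g $ a $ c * (\<Sum>d\<in>UNIV. u d * P b d))
        - (\<Sum>a\<in>UNIV. u a * g $ b $ c * (\<Sum>d\<in>UNIV. u d * P d a))"
    unfolding sum_collect by (intro sum.cong refl) (simp add: P_commute algebra_simps)
  moreover have "(\<Sum>a\<in>UNIV. u a * P a c * (\<Sum>d\<in>UNIV. u d * g $ b $ d)) = w b * (\<Sum>a\<in>UNIV. u a * P a c)"
    by (simp add: lower sum_distrib_left ac_simps)
  moreover have "(\<Sum>a\<in>UNIV. u a * P b c * (\<Sum>d\<in>UNIV. u d * g $ a $ d)) = (\<Sum>a\<in>UNIV. u a * w a) * P b c"
    by (simp add: lower sum_distrib_left sum_distrib_right ac_simps)
  moreover have "(\<Sum>a\<in>UNIV. u a * g $ a $ c * (\<Sum>d\<in>UNIV. u d * P b d)) = w c * (\<Sum>a\<in>UNIV. u a * P a b)"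
  proof -
    have "(\<Sum>a\<in>UNIV. u a * g $ a $ c * (\<Sum>d\<in>UNIV. u d * P b d))
        = (\<Sum>a\<in>UNIV. u a * g $ a $ c) * (\<Sum>d\<in>UNIV. u d * P b d)"
      by (simp add: sum_distrib_right)
    then show ?thesis
      by (simp add: lower P_commute[of b])
  qed
  moreover have "(\<Sum>a\<in>UNIV. u a * g $ b $ c * (\<Sum>d\<in>UNIV. u d * P d a))
      = g $ b $ c * (\<Sum>a\<in>UNIV. u a * (\<Sum>d\<in>UNIV. u d * P d a))"
    by (simp add: sum_distrib_left ac_simps)
  ultimately show ?thesis
    by simp
qed

locale metric_symbol =
  fixes g h :: "real^'n::finite^'n" and \<xi> :: "real^'n"
  assumes g_symmetric: "transpose g = g"
    and g_invertible: "invertible g"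
    and h_symmetric: "transpose h = h"
begin

lemma g_commute: "g $ a $ b = g $ b $ a"
  using arg_cong[OF g_symmetric, of "\<lambda>M. M $ b $ a"] by (simp add: transpose_def)

lemma h_commute: "h $ a $ b = h $ b $ a"
  using arg_cong[OF h_symmetric, of "\<lambda>M. M $ b $ a"] by (simp add: transpose_def)

lemma ginv_commute: "ginv g a b = ginv g b a"
  using arg_cong[OF transpose_matrix_inv_symmetric[OF g_invertible g_symmetric], of "\<lambda>M. M $ b $ a"]
  by (simp add: ginv_def transpose_def)

lemma lower_raised: "(\<Sum>e\<in>UNIV. (\<Sum>l\<in>UNIV. ginv g e l * f l) * g $ e $ d) = f d"
proof -
  have "(\<Sum>e\<in>UNIV. (\<Sum>l\<in>UNIV. ginv g e l * f l) * g $ e $ d)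
      = (\<Sum>l\<in>UNIV. f l * (\<Sum>e\<in>UNIV. ginv g l e * g $ e $ d))"
    unfolding sum_distrib_right sum_distrib_left
    by (subst sum.swap) (simp add: ginv_commute ac_simps)
  also have "\<dots> = f d"
    by (simp add: sum_ginv_mult[OF g_invertible] if_distrib cong: if_cong)
  finally show ?thesis .
qed

lemma raise_lower: "(\<Sum>e\<in>UNIV. raise g \<xi> e * g $ e $ d) = \<xi> $ d"
  unfolding raise_def by (rule lower_raised)

lemma raise_snd_lower: "(\<Sum>e\<in>UNIV. raise_snd g h b e * g $ e $ d) = h $ b $ d"
  unfolding raise_snd_def by (rule lower_raised)

lemma raise_lower': "(\<Sum>e\<in>UNIV. raise g \<xi> e * g $ d $ e) = \<xi> $ d"
  by (subst g_commute) (rule raise_lower)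

lemma sum_raise_covector: "(\<Sum>a\<in>UNIV. raise g \<xi> a * \<xi> $ a) = gnorm2 g \<xi>"
  unfolding gnorm2_def raise_def sum_distrib_right by (simp add: ac_simps)

lemma sum_covector_raise_snd: "(\<Sum>a\<in>UNIV. \<xi> $ a * raise_snd g h b a) = contract g \<xi> h b"
  unfolding raise_snd_def contract_def raise_def sum_distrib_right sum_distrib_left
  by (subst sum.swap) (simp add: ginv_commute h_commute ac_simps)

lemma sum_covector_raise: "(\<Sum>a\<in>UNIV. \<xi> $ a * raise g \<xi> a) = gnorm2 g \<xi>"
  unfolding gnorm2_def raise_def sum_distrib_left
  by (simp add: ac_simps)

lemma trace_raise_snd: "(\<Sum>a\<in>UNIV. raise_snd g h a a) = gtrace g h"
  unfolding raise_snd_def gtrace_def ..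

lemma contract_commute: "(\<Sum>a\<in>UNIV. raise g \<xi> a * h $ c $ a) = contract g \<xi> h c"
  unfolding contract_def by (simp add: h_commute)

lemma sum_ginv_covector:
  "(\<Sum>b\<in>UNIV. \<Sum>c\<in>UNIV. ginv g b c * \<xi> $ c * f b) = (\<Sum>b\<in>UNIV. raise g \<xi> b * f b)"
  "(\<Sum>b\<in>UNIV. \<Sum>c\<in>UNIV. ginv g b c * \<xi> $ b * f c) = (\<Sum>b\<in>UNIV. raise g \<xi> b * f b)"
  unfolding raise_def sum_distrib_right
  by (simp add: ac_simps) (subst sum.swap, simp add: ginv_commute ac_simps)

lemma Riem_lin_jet2_symbol:
  "Riem_lin g (jet2_symbol \<xi> h) a b c d
     = -(1/2) * (\<xi> $ a * \<xi> $ c * h $ b $ d - \<xi> $ a * \<xi> $ d * h $ b $ c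
                 - \<xi> $ b * \<xi> $ c * h $ a $ d + \<xi> $ b * \<xi> $ d * h $ a $ c)"
proof -
  have "Riem_lin g (jet2_symbol \<xi> h) a b c d
      = -(1/2) * (\<xi> $ a * \<xi> $ c * (\<Sum>e\<in>UNIV. raise_snd g h b e * g $ e $ d)
                  - \<xi> $ a * h $ b $ c * (\<Sum>e\<in>UNIV. raise g \<xi> e * g $ e $ d)
                  - \<xi> $ b * \<xi> $ c * (\<Sum>e\<in>UNIV. raise_snd g h a e * g $ e $ d)
                  + \<xi> $ b * h $ a $ c * (\<Sum>e\<in>UNIV. raise g \<xi> e * g $ e $ d))"
    unfolding Riem_lin_def Riem_up_lin_jet2_symbol sum_collect
    by (rule sum.cong) (auto simp: algebra_simps)
  then show ?thesis
    by (simp add: raise_lower raise_snd_lower)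
qed

lemma Ric_lin_jet2_symbol:
  "Ric_lin g (jet2_symbol \<xi> h) b c
     = -(1/2) * (\<xi> $ c * contract g \<xi> h b + \<xi> $ b * contract g \<xi> h c
                 - gnorm2 g \<xi> * h $ b $ c - \<xi> $ b * \<xi> $ c * gtrace g h)"
proof -
  have "Ric_lin g (jet2_symbol \<xi> h) b c
      = -(1/2) * (\<xi> $ c * (\<Sum>a\<in>UNIV. \<xi> $ a * raise_snd g h b a)
                  - h $ b $ c * (\<Sum>a\<in>UNIV. \<xi> $ a * raise g \<xi> a)
                  - \<xi> $ b * \<xi> $ c * (\<Sum>a\<in>UNIV. raise_snd g h a a)
                  + \<xi> $ b * (\<Sum>a\<in>UNIV. raise g \<xi> a * h $ a $ c))"
    unfolding Ric_lin_def Riem_up_lin_jet2_symbol sum_collect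
    by (rule sum.cong) (auto simp: algebra_simps)
  then show ?thesis
    by (simp add: sum_covector_raise_snd sum_covector_raise trace_raise_snd contract_def[symmetric]
        algebra_simps)
qed

lemma Scal_lin_jet2_symbol:
  "Scal_lin g (jet2_symbol \<xi> h) = gnorm2 g \<xi> * gtrace g h - contract_twice g \<xi> h"
proof -
  have "Scal_lin g (jet2_symbol \<xi> h)
      = -(1/2) * ((\<Sum>b\<in>UNIV. \<Sum>c\<in>UNIV. ginv g b c * \<xi> $ c * contract g \<xi> h b)
                  + (\<Sum>b\<in>UNIV. \<Sum>c\<in>UNIV. ginv g b c * \<xi> $ b * contract g \<xi> h c)
                  - gnorm2 g \<xi> * (\<Sum>b\<in>UNIV. \<Sum>c\<in>UNIV. ginv g b c * h $ b $ c)
                  - gtrace g h * (\<Sum>b\<in>UNIV. \<Sum>c\<in>UNIV. ginv g b c * \<xi> $ b * \<xi> $ c))"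
    unfolding Scal_lin_def Ric_lin_jet2_symbol sum_collect
    by (intro sum.cong refl) (simp add: algebra_simps)
  also have "\<dots> = -(1/2) * (2 * contract_twice g \<xi> h - 2 * gnorm2 g \<xi> * gtrace g h)"
    unfolding sum_ginv_covector contract_twice_def gnorm2_def gtrace_def by simp
  finally show ?thesis
    by (simp add: algebra_simps)
qed

lemma Gam_up_lin_jet1_symbol:
  "Gam_up_lin g (jet1_symbol \<xi> h) k
     = (\<Sum>b\<in>UNIV. raise g \<xi> b * raise_snd g h b k) - (1/2) * raise g \<xi> k * gtrace g h"
proof -
  have "Gam_up_lin g (jet1_symbol \<xi> h) k
      = (1/2) * ((\<Sum>a\<in>UNIV. \<Sum>b\<in>UNIV. ginv g a b * \<xi> $ b * raise_snd g h a k)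
                 + (\<Sum>a\<in>UNIV. \<Sum>b\<in>UNIV. ginv g a b * \<xi> $ a * raise_snd g h b k)
                 - raise g \<xi> k * gtrace g h)"
    unfolding Gam_up_lin_def Chr_lin_def jet1_symbol_def raise_snd_def raise_def gtrace_def sum_collect
    by (intro sum.cong refl) (simp add: algebra_simps)
  also have "\<dots> = (1/2) * (2 * (\<Sum>b\<in>UNIV. raise g \<xi> b * raise_snd g h b k) - raise g \<xi> k * gtrace g h)"
    unfolding sum_ginv_covector by simp
  finally show ?thesis
    by simp
qed

lemma covector_Gam_up_lin_jet1_symbol:
  "(\<Sum>l\<in>UNIV. \<xi> $ l * Gam_up_lin g (jet1_symbol \<xi> h) l)
     = contract_twice g \<xi> h - (1/2) * gnorm2 g \<xi> * gtrace g h"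
proof -
  have "(\<Sum>l\<in>UNIV. \<xi> $ l * Gam_up_lin g (jet1_symbol \<xi> h) l)
      = (\<Sum>l\<in>UNIV. \<Sum>b\<in>UNIV. raise g \<xi> b * (\<xi> $ l * raise_snd g h b l))
        - (1/2) * (\<Sum>l\<in>UNIV. \<xi> $ l * raise g \<xi> l) * gtrace g h"
    unfolding Gam_up_lin_jet1_symbol sum_collect
    by (intro sum.cong refl) (simp add: algebra_simps sum_distrib_left)
  then show ?thesis
    by (simp add: sum_swap_factor sum_covector_raise_snd sum_covector_raise contract_twice_def)
qed

lemma lower_Gam_up_lin_jet1_symbol:
  "(\<Sum>l\<in>UNIV. g $ k $ l * Gam_up_lin g (jet1_symbol \<xi> h) l)
     = contract g \<xi> h k - (1/2) * \<xi> $ k * gtrace g h"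
proof -
  have "(\<Sum>l\<in>UNIV. g $ k $ l * Gam_up_lin g (jet1_symbol \<xi> h) l)
      = (\<Sum>l\<in>UNIV. \<Sum>b\<in>UNIV. raise g \<xi> b * (raise_snd g h b l * g $ l $ k))
        - (1/2) * (\<Sum>l\<in>UNIV. raise g \<xi> l * g $ l $ k) * gtrace g h"
    unfolding Gam_up_lin_jet1_symbol sum_collect
    by (intro sum.cong refl) (simp add: g_commute algebra_simps sum_distrib_left)
  then show ?thesis
    by (simp add: sum_swap_factor raise_snd_lower raise_lower contract_def)
qed

lemma sum_raise_Riem_lin_jet2_symbol:
  "(\<Sum>d\<in>UNIV. raise g \<xi> d * Riem_lin g (jet2_symbol \<xi> h) a b c d)
     = -(1/2) * (\<xi> $ a * \<xi> $ c * contract g \<xi> h b - \<xi> $ a * gnorm2 g \<xi> * h $ b $ c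
                 - \<xi> $ b * \<xi> $ c * contract g \<xi> h a + \<xi> $ b * gnorm2 g \<xi> * h $ a $ c)"
proof -
  have "(\<Sum>d\<in>UNIV. raise g \<xi> d * Riem_lin g (jet2_symbol \<xi> h) a b c d)
      = -(1/2) * (\<xi> $ a * \<xi> $ c * (\<Sum>d\<in>UNIV. raise g \<xi> d * h $ b $ d)
                  - \<xi> $ a * h $ b $ c * (\<Sum>d\<in>UNIV. raise g \<xi> d * \<xi> $ d)
                  - \<xi> $ b * \<xi> $ c * (\<Sum>d\<in>UNIV. raise g \<xi> d * h $ a $ d)
                  + \<xi> $ b * h $ a $ c * (\<Sum>d\<in>UNIV. raise g \<xi> d * \<xi> $ d))"
    unfolding Riem_lin_jet2_symbol sum_collect by (rule sum.cong) (auto simp: algebra_simps)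
  then show ?thesis
    unfolding contract_commute sum_raise_covector by (simp add: algebra_simps)
qed

lemma sum_raise_raise_Riem_lin_jet2_symbol:
  "(\<Sum>a\<in>UNIV. \<Sum>d\<in>UNIV. raise g \<xi> a * raise g \<xi> d * Riem_lin g (jet2_symbol \<xi> h) a b c d)
     = -(1/2) * (gnorm2 g \<xi> * \<xi> $ c * contract g \<xi> h b - (gnorm2 g \<xi>)\<^sup>2 * h $ b $ c
                 - \<xi> $ b * \<xi> $ c * contract_twice g \<xi> h + gnorm2 g \<xi> * \<xi> $ b * contract g \<xi> h c)"
proof -
  have "(\<Sum>a\<in>UNIV. \<Sum>d\<in>UNIV. raise g \<xi> a * raise g \<xi> d * Riem_lin g (jet2_symbol \<xi> h) a b c d)
      = (\<Sum>a\<in>UNIV. raise g \<xi> a * (\<Sum>d\<in>UNIV. raise g \<xi> d * Riem_lin g (jet2_symbol \<xi> h) a b c d))"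
    by (simp add: sum_distrib_left mult.assoc)
  also have "\<dots> = -(1/2) * (\<xi> $ c * contract g \<xi> h b * (\<Sum>a\<in>UNIV. raise g \<xi> a * \<xi> $ a)
                  - gnorm2 g \<xi> * h $ b $ c * (\<Sum>a\<in>UNIV. raise g \<xi> a * \<xi> $ a)
                  - \<xi> $ b * \<xi> $ c * (\<Sum>a\<in>UNIV. raise g \<xi> a * contract g \<xi> h a)
                  + \<xi> $ b * gnorm2 g \<xi> * (\<Sum>a\<in>UNIV. raise g \<xi> a * h $ a $ c))"
    unfolding sum_raise_Riem_lin_jet2_symbol sum_collect
    by (rule sum.cong) (auto simp: algebra_simps)
  finally show ?thesis
    unfolding sum_raise_covector contract_twice_def[symmetric] contract_def[symmetric]
    by (simp add: power2_eq_square algebra_simps)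
qed

lemma sum_raise_Ric_lin_jet2_symbol:
  "(\<Sum>a\<in>UNIV. raise g \<xi> a * Ric_lin g (jet2_symbol \<xi> h) a c)
     = -(1/2) * \<xi> $ c * (contract_twice g \<xi> h - gnorm2 g \<xi> * gtrace g h)"
proof -
  have "(\<Sum>a\<in>UNIV. raise g \<xi> a * Ric_lin g (jet2_symbol \<xi> h) a c)
      = -(1/2) * (\<xi> $ c * (\<Sum>a\<in>UNIV. raise g \<xi> a * contract g \<xi> h a)
                  + contract g \<xi> h c * (\<Sum>a\<in>UNIV. raise g \<xi> a * \<xi> $ a)
                  - gnorm2 g \<xi> * (\<Sum>a\<in>UNIV. raise g \<xi> a * h $ a $ c)
                  - \<xi> $ c * gtrace g h * (\<Sum>a\<in>UNIV. raise g \<xi> a * \<xi> $ a))"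
    unfolding Ric_lin_jet2_symbol sum_collect by (rule sum.cong) (auto simp: algebra_simps)
  then show ?thesis
    unfolding sum_raise_covector contract_twice_def[symmetric] contract_def[symmetric]
    by (simp add: algebra_simps)
qed

lemma Schouten_lin_jet2_symbol_commute:
  "Schouten_lin g (jet2_symbol \<xi> h) x y = Schouten_lin g (jet2_symbol \<xi> h) y x"
  unfolding Schouten_lin_def Ric_lin_jet2_symbol by (simp add: h_commute[of x] g_commute[of x] algebra_simps)

lemma sum_raise_Schouten_lin_jet2_symbol:
  assumes n: "CARD('n) \<ge> 3"
  shows "(\<Sum>a\<in>UNIV. raise g \<xi> a * Schouten_lin g (jet2_symbol \<xi> h) a c)
     = - \<xi> $ c * (contract_twice g \<xi> h - gnorm2 g \<xi> * gtrace g h) / (2 * (real CARD('n) - 1))"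
proof -
  have "(\<Sum>a\<in>UNIV. raise g \<xi> a * Schouten_lin g (jet2_symbol \<xi> h) a c)
      = 1 / (real CARD('n) - 2) * ((\<Sum>a\<in>UNIV. raise g \<xi> a * Ric_lin g (jet2_symbol \<xi> h) a c)
          - Scal_lin g (jet2_symbol \<xi> h) / (2 * (real CARD('n) - 1)) * (\<Sum>a\<in>UNIV. raise g \<xi> a * g $ a $ c))"
    unfolding Schouten_lin_def sum_collect by (intro sum.cong refl) (simp add: algebra_simps)
  also have "\<dots> = - \<xi> $ c * (contract_twice g \<xi> h - gnorm2 g \<xi> * gtrace g h) / (2 * (real CARD('n) - 1))"
  proof -
    have "real CARD('n) - 2 \<noteq> 0" "real CARD('n) - 1 \<noteq> 0"
      using n by auto
    then show ?thesis
      unfolding sum_raise_Ric_lin_jet2_symbol Scal_lin_jet2_symbol raise_lower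
      by (simp add: divide_simps) (simp add: algebra_simps)
  qed
  finally show ?thesis .
qed

lemma sum_raise_raise_Weyl_lin_jet2_symbol:
  assumes n: "CARD('n) \<ge> 3" and trace_free: "gtrace g h = 0"
  shows "(\<Sum>a\<in>UNIV. \<Sum>d\<in>UNIV. raise g \<xi> a * raise g \<xi> d * Weyl_lin g (jet2_symbol \<xi> h) a b c d)
    = (real CARD('n) - 3) / (2 * (real CARD('n) - 2)) *
      ((gnorm2 g \<xi>)\<^sup>2 * h $ b $ c - gnorm2 g \<xi> * (\<xi> $ b * contract g \<xi> h c + \<xi> $ c * contract g \<xi> h b)
       + (real CARD('n) - 2) / (real CARD('n) - 1) * \<xi> $ b * \<xi> $ c * contract_twice g \<xi> h
       + 1 / (real CARD('n) - 1) * gnorm2 g \<xi> * contract_twice g \<xi> h * g $ b $ c)"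
    (is "_ = ?rhs")
proof -
  have double_Schouten: "(\<Sum>a\<in>UNIV. raise g \<xi> a * (\<Sum>d\<in>UNIV. raise g \<xi> d * Schouten_lin g (jet2_symbol \<xi> h) d a))
      = - gnorm2 g \<xi> * contract_twice g \<xi> h / (2 * (real CARD('n) - 1))"
    unfolding sum_raise_covector[symmetric] sum_raise_Schouten_lin_jet2_symbol[OF n] trace_free sum_collect
      sum_divide_distrib
    by (intro sum.cong refl) (simp add: algebra_simps)
  have "(\<Sum>a\<in>UNIV. \<Sum>d\<in>UNIV. raise g \<xi> a * raise g \<xi> d * Weyl_lin g (jet2_symbol \<xi> h) a b c d)
      = (\<Sum>a\<in>UNIV. \<Sum>d\<in>UNIV. raise g \<xi> a * raise g \<xi> d * Riem_lin g (jet2_symbol \<xi> h) a b c d)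
        + \<xi> $ b * (\<Sum>a\<in>UNIV. raise g \<xi> a * Schouten_lin g (jet2_symbol \<xi> h) a c)
        + \<xi> $ c * (\<Sum>a\<in>UNIV. raise g \<xi> a * Schouten_lin g (jet2_symbol \<xi> h) a b)
        - gnorm2 g \<xi> * Schouten_lin g (jet2_symbol \<xi> h) b c
        - g $ b $ c * (\<Sum>a\<in>UNIV. raise g \<xi> a * (\<Sum>d\<in>UNIV. raise g \<xi> d * Schouten_lin g (jet2_symbol \<xi> h) d a))"
    unfolding Weyl_lin_def
    using contract_Kulkarni_Nomizu[where u = "raise g \<xi>" and w = "vec_nth \<xi>"
        and R = "\<lambda>a d. Riem_lin g (jet2_symbol \<xi> h) a b c d" and P = "Schouten_lin g (jet2_symbol \<xi> h)",
        OF raise_lower' raise_lower Schouten_lin_jet2_symbol_commute]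
    by (simp add: sum_raise_covector sum_covector_raise mult.commute)
  also have "\<dots> = ?rhs"
  proof -
    have "real CARD('n) - 2 \<noteq> 0" "real CARD('n) - 1 \<noteq> 0"
      using n by auto
    then show ?thesis
      unfolding double_Schouten
      unfolding sum_raise_raise_Riem_lin_jet2_symbol sum_raise_Schouten_lin_jet2_symbol[OF n]
      unfolding Schouten_lin_def Ric_lin_jet2_symbol Scal_lin_jet2_symbol trace_free
      by (simp add: divide_simps) (simp add: algebra_simps power2_eq_square)
  qed
  finally show ?thesis .
qed

end

theorem lemma3p2:
  fixes g h :: "real^'n^'n" and G1 :: "'n::finite jet1" and G2 :: "'n jet2"
    and \<xi> :: "real^'n"
  assumes dim: "CARD('n) \<ge> 3"
    and g_sym: "transpose g = g"
    and g_pos: "\<And>v. v \<noteq> 0 \<Longrightarrow> v \<bullet> (g *v v) > 0"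
    and g_det: "det g = 1"
    and G1_sym: "\<And>a b c. G1 a b c = G1 b a c"
    and G2_sym: "\<And>a b c d. G2 a b c d = G2 b a c d \<and> G2 a b c d = G2 a b d c"
    and h_sym: "transpose h = h"
    and h_tangent: "(\<Sum>a\<in>UNIV. \<Sum>b\<in>UNIV. ginv g a b * h $ a $ b) = 0"
  shows "\<forall>b c.
    (\<Sum>a\<in>UNIV. \<Sum>d\<in>UNIV. raise g \<xi> a * raise g \<xi> d *
        psym2 (\<lambda>g' G1' G2'. Weyl g' G1' G2' a b c d) g G1 G2 \<xi> h)
    = (real CARD('n) - 3) / (2 * (real CARD('n) - 2)) *
      ( (gnorm2 g \<xi>)^2 * h $ b $ c
        - gnorm2 g \<xi> * (\<xi> $ b * psym1_negi (\<lambda>g' G1'. Gam_down g' G1' c) g G1 \<xi> h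
                        + \<xi> $ c * psym1_negi (\<lambda>g' G1'. Gam_down g' G1' b) g G1 \<xi> h)
        + (real CARD('n) - 2) / (real CARD('n) - 1) * \<xi> $ b * \<xi> $ c *
            (\<Sum>l\<in>UNIV. \<xi> $ l * psym1_negi (\<lambda>g' G1'. Gam_up g' G1' l) g G1 \<xi> h)
        + 1 / (real CARD('n) - 1) * gnorm2 g \<xi> *
            (\<Sum>l\<in>UNIV. \<xi> $ l * psym1_negi (\<lambda>g' G1'. Gam_up g' G1' l) g G1 \<xi> h) * g $ b $ c )"
proof -
  interpret metric_symbol g h \<xi>
    using g_sym g_det h_sym by unfold_locales (simp_all add: invertible_det_nz)
  have trace_free: "gtrace g h = 0"
    using h_tangent unfolding gtrace_def .
  show ?thesis
    unfolding psym2_Weyl psym1_negi_Gam_up psym1_negi_Gam_down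
      covector_Gam_up_lin_jet1_symbol lower_Gam_up_lin_jet1_symbol trace_free
    using sum_raise_raise_Weyl_lin_jet2_symbol[OF dim trace_free] by simp
qed

end
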